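(* Let $K$ be a totally real number field of degree $n$ and let $S\subseteq\mathbb{R}^n$ be a polytope of dimension $n-1$ whose vertices are images $\iota_M(\alpha)$ of elements $\alpha\in\mathcal{O}_K^+$. Suppose $S$ is contained in the hyperplane $\{x\in\mathbb{R}^n:\sum_{i=1}^n\tau_i(\delta)x_i=1\}$ for some $\delta\in\mathcal{O}_K^{\vee,+}$. Then $S\subseteq\mathcal{S}_K$.
   Context: $\tau_1,\dots,\tau_n$ are the real embeddings of $K$, $\iota_M:K\to\mathbb{R}^n$, $\alpha\mapsto(\tau_1(\alpha),\dots,\tau_n(\alpha))$, $\Lambda=\iota_M(\mathcal{O}_K)$. $\mathcal{O}_K^+$ is the set of totally positive elements of $\mathcal{O}_K$. The sail $\mathcal{S}_K$ is the boundary of the Klein polyhedron $\operatorname{Conv}(\Lambda\cap\mathbb{R}_{>0}^n)$. The codifferent is $\mathcal{O}_K^\vee=\{\delta\in K:\operatorname{Tr}_{K/\mathbb{Q}}(\delta\alpha)\in\mathbb{Z}\ \forall\alpha\in\mathcal{O}_K\}$ and $\mathcal{O}_K^{\vee,+}$ is the set of its totally positive elements. *)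

theory Defs
  imports "HOL-Analysis.Analysis" "HOL-Computational_Algebra.Polynomial"
begin

text \<open>A number field K is modelled as a subfield of the reals (a totally real
field always has a real embedding, and the statement is invariant under isomorphism).\<close>

definition real_subfield :: "real set \<Rightarrow> bool" where
  "real_subfield K \<longleftrightarrow> 0 \<in> K \<and> 1 \<in> K \<and>
     (\<forall>x\<in>K. \<forall>y\<in>K. x + y \<in> K \<and> x - y \<in> K \<and> x * y \<in> K) \<and>
     (\<forall>x\<in>K. x \<noteq> 0 \<longrightarrow> inverse x \<in> K)"

definition rat_degree :: "real set \<Rightarrow> nat \<Rightarrow> bool" where
  "rat_degree K n \<longleftrightarrow> (\<exists>b :: nat \<Rightarrow> real. (\<forall>i<n. b i \<in> K) \<and>
     (\<forall>x\<in>K. \<exists>!c :: nat \<Rightarrow> rat. (\<forall>i\<ge>n. c i = 0) \<and> x = (\<Sum>i<n. of_rat (c i) * b i)))"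

definition field_hom_on :: "real set \<Rightarrow> (real \<Rightarrow> 'b::comm_ring_1) \<Rightarrow> bool" where
  "field_hom_on K f \<longleftrightarrow> f 1 = 1 \<and>
     (\<forall>x\<in>K. \<forall>y\<in>K. f (x + y) = f x + f y \<and> f (x * y) = f x * f y)"

definition algebraic_integer :: "real \<Rightarrow> bool" where
  "algebraic_integer x \<longleftrightarrow> (\<exists>p :: int poly. lead_coeff p = 1 \<and> poly (map_poly of_int p) x = 0)"

definition ring_of_integers :: "real set \<Rightarrow> real set" where
  "ring_of_integers K = {x \<in> K. algebraic_integer x}"

definition trace_emb :: "('n::finite \<Rightarrow> real \<Rightarrow> real) \<Rightarrow> real \<Rightarrow> real" where
  "trace_emb tau x = (\<Sum>i\<in>UNIV. tau i x)"

definition totally_positive :: "('n::finite \<Rightarrow> real \<Rightarrow> real) \<Rightarrow> real set \<Rightarrow> real set" where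
  "totally_positive tau A = {x \<in> A. \<forall>i. tau i x > 0}"

definition codifferent :: "real set \<Rightarrow> ('n::finite \<Rightarrow> real \<Rightarrow> real) \<Rightarrow> real set" where
  "codifferent K tau = {d \<in> K. \<forall>a \<in> ring_of_integers K. trace_emb tau (d * a) \<in> \<int>}"

definition iota_M :: "('n::finite \<Rightarrow> real \<Rightarrow> real) \<Rightarrow> real \<Rightarrow> real ^ 'n" where
  "iota_M tau a = (\<chi> i. tau i a)"

definition sail :: "real set \<Rightarrow> ('n::finite \<Rightarrow> real \<Rightarrow> real) \<Rightarrow> (real ^ 'n) set" where
  "sail K tau = frontier (convex hull (iota_M tau ` ring_of_integers K \<inter> {x. \<forall>i. 0 < x $ i}))"

end

theory Submission
  imports Defs
begin

text \<open>For totally positive \<alpha> \<in> O_K and \<delta> in the codifferent, Tr(\<delta>\<alpha>) is a positive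
integer, hence at least 1. Since Tr(\<delta>\<alpha>) is the inner product of \<iota>(\<delta>) and \<iota>(\<alpha>), the
Klein polyhedron lies in the half-space \<iota>(\<delta>) \<bullet> y \<ge> 1, whose boundary hyperplane
contains S. Being the convex hull of its vertices, S lies in the Klein polyhedron,
so it is contained in a supporting hyperplane and hence in the frontier.
Only the multiplicativity of the embeddings enters.\<close>

lemma frontier_supporting_hyperplane:
  fixes C :: "'a::euclidean_space set"
  assumes "a \<noteq> 0" and "C \<subseteq> {y. a \<bullet> y \<ge> b}" and "x \<in> C" and "a \<bullet> x = b"
  shows "x \<in> frontier C"
proof -
  have "interior C \<subseteq> {y. a \<bullet> y > b}"
    using interior_mono[OF assms(2)] assms(1) by simp
  then show ?thesis
    using assms(3,4) closure_subset by (auto simp: frontier_def)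
qed

lemma subset_convex_hull_extreme_points:
  fixes S :: "'a::euclidean_space set"
  assumes "compact S" and "convex S" and "\<And>v. v extreme_point_of S \<Longrightarrow> v \<in> P"
  shows "S \<subseteq> convex hull P"
proof -
  have "S = convex hull {v. v extreme_point_of S}"
    using Krein_Milman_Minkowski assms(1,2) by blast
  also have "\<dots> \<subseteq> convex hull P"
    using assms(3) by (intro hull_mono) blast
  finally show ?thesis .
qed

lemma trace_emb_mult_eq_inner:
  assumes "\<And>i. field_hom_on K (tau i)" and "a \<in> K" and "b \<in> K"
  shows "trace_emb tau (a * b) = iota_M tau a \<bullet> iota_M tau b"
  using assms by (simp add: trace_emb_def field_hom_on_def iota_M_def inner_vec_def)

lemma klein_polyhedron_subset_halfspace:
  assumes tau_hom: "\<And>i. field_hom_on K (tau i)"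
    and \<delta>_mem: "\<delta> \<in> totally_positive tau (codifferent K tau)"
  shows "convex hull (iota_M tau ` ring_of_integers K \<inter> {x. \<forall>i. 0 < x $ i})
           \<subseteq> {y. iota_M tau \<delta> \<bullet> y \<ge> 1}"
proof (rule hull_minimal)
  show "convex {y. iota_M tau \<delta> \<bullet> y \<ge> 1}"
    by (rule convex_halfspace_ge)
next
  have "iota_M tau \<delta> \<bullet> iota_M tau \<alpha> \<ge> 1"
    if \<alpha>_int: "\<alpha> \<in> ring_of_integers K" and \<alpha>_pos: "\<forall>i. 0 < tau i \<alpha>" for \<alpha>
  proof -
    have trace_eq: "trace_emb tau (\<delta> * \<alpha>) = iota_M tau \<delta> \<bullet> iota_M tau \<alpha>"
      using tau_hom \<delta>_mem \<alpha>_int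
      by (intro trace_emb_mult_eq_inner)
        (auto simp: totally_positive_def codifferent_def ring_of_integers_def)
    have "trace_emb tau (\<delta> * \<alpha>) \<in> \<int>"
      using \<delta>_mem \<alpha>_int by (auto simp: totally_positive_def codifferent_def)
    moreover have "iota_M tau \<delta> \<bullet> iota_M tau \<alpha> > 0"
      using \<delta>_mem \<alpha>_pos
      by (auto simp: iota_M_def inner_vec_def totally_positive_def intro!: sum_pos)
    ultimately show ?thesis
      using Ints_nonzero_abs_ge1 trace_eq by fastforce
  qed
  then show "iota_M tau ` ring_of_integers K \<inter> {x. \<forall>i. 0 < x $ i}
               \<subseteq> {y. iota_M tau \<delta> \<bullet> y \<ge> 1}"
    by (auto simp: iota_M_def)
qed

theorem lemma2p9:
  fixes K :: "real set" and tau :: "'n::finite \<Rightarrow> real \<Rightarrow> real"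
    and S :: "(real ^ 'n) set" and \<delta> :: real
  assumes K_field: "real_subfield K"
    and K_degree: "rat_degree K CARD('n)"
    and tau_hom: "\<And>i. field_hom_on K (tau i)"
    and tau_distinct: "\<And>i j. i \<noteq> j \<Longrightarrow> \<exists>x\<in>K. tau i x \<noteq> tau j x"
    and totally_real: "\<And>\<sigma> :: real \<Rightarrow> complex. field_hom_on K \<sigma> \<Longrightarrow>
                         \<exists>i. \<forall>x\<in>K. \<sigma> x = complex_of_real (tau i x)"
    and S_polytope: "polytope S"
    and S_dim: "aff_dim S = int CARD('n) - 1"
    and S_vertices: "\<And>v. v extreme_point_of S \<Longrightarrow>
                       v \<in> iota_M tau ` totally_positive tau (ring_of_integers K)"
    and \<delta>_mem: "\<delta> \<in> totally_positive tau (codifferent K tau)"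
    and S_hyp: "S \<subseteq> {x. (\<Sum>i\<in>UNIV. tau i \<delta> * x $ i) = 1}"
  shows "S \<subseteq> sail K tau"
proof
  let ?C = "convex hull (iota_M tau ` ring_of_integers K \<inter> {x. \<forall>i. 0 < x $ i})"
  fix x assume "x \<in> S"
  have "S \<subseteq> ?C"
    using S_polytope S_vertices
    by (intro subset_convex_hull_extreme_points polytope_imp_compact polytope_imp_convex)
      (fastforce simp: totally_positive_def iota_M_def)+
  moreover have "iota_M tau \<delta> \<bullet> x = 1"
    using \<open>x \<in> S\<close> S_hyp by (auto simp: iota_M_def inner_vec_def)
  moreover from this have "iota_M tau \<delta> \<noteq> 0"
    by auto
  ultimately have "x \<in> frontier ?C"
    using klein_polyhedron_subset_halfspace[OF tau_hom \<delta>_mem] \<open>x \<in> S\<close>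
    by (intro frontier_supporting_hyperplane) auto
  then show "x \<in> sail K tau"
    by (simp add: sail_def)
qed

end
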